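(* For all positive integers $m_1,\dots,m_S$, $$B(m_1,\dots,m_S)=\sum_{\ell_1=0}^{m_1-1}\cdots\sum_{\ell_S=0}^{m_S-1}\frac{(\ell_1+\dots+\ell_S)!}{\ell_1!\cdots\ell_S!}.$$
   Context: For nonnegative integers $n_1,\dots,n_S$, $E(n_1,\dots,n_S)$ denotes the number of block derangements: $S$ players hold $n_1,\dots,n_S$ distinct cards respectively; all $N=n_1+\dots+n_S$ cards are redealt so that player $j$ again receives exactly $n_j$ cards (only which cards each player gets matters); $E$ counts the deals in which no player receives any card he originally held. Equivalently, $E(n_1,\dots,n_S)$ is the coefficient of $x_1^{n_1}\cdots x_S^{n_S}$ in $\prod_{j=1}^S(x_1+\dots+x_S-x_j)^{n_j}$. By convention $E(0,\dots,0)=1$. For positive integers $m_1,\dots,m_S$, $B(m_1,\dots,m_S)=\sum_{k_1=1}^{m_1}\cdots\sum_{k_S=1}^{m_S}\binom{m_1}{k_1}\cdots\binom{m_S}{k_S}E(k_1-1,\dots,k_S-1)$. *)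

theory Defs
  imports "HOL-Library.FuncSet" Complex_Main
begin

text \<open>Players are 0,...,S-1; player j holds n j cards, the cards are (j,c) with c < n j.\<close>
definition cards :: "nat \<Rightarrow> (nat \<Rightarrow> nat) \<Rightarrow> (nat \<times> nat) set" where
  "cards S n = {(j, c). j < S \<and> c < n j}"

definition block_derangements :: "nat \<Rightarrow> (nat \<Rightarrow> nat) \<Rightarrow> ((nat \<times> nat) \<Rightarrow> nat) set" where
  "block_derangements S n =
     {f \<in> cards S n \<rightarrow>\<^sub>E {..<S}.
        (\<forall>j<S. card {x \<in> cards S n. f x = j} = n j) \<and>
        (\<forall>x \<in> cards S n. f x \<noteq> fst x)}"

definition E :: "nat \<Rightarrow> (nat \<Rightarrow> nat) \<Rightarrow> nat" where
  "E S n = card (block_derangements S n)"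

definition B :: "nat \<Rightarrow> (nat \<Rightarrow> nat) \<Rightarrow> nat" where
  "B S m = (\<Sum>k \<in> Pi\<^sub>E {..<S} (\<lambda>j. {1..m j}).
              (\<Prod>j<S. m j choose k j) * E S (\<lambda>j. k j - 1))"

end

theory Submission
  imports Defs
begin

text \<open>
  Let player j hold l j cards and count the deals in which every player again receives as many
  cards as he held: by the multinomial theorem there are (\<Sum>j. l j)! / \<Prod>j. (l j)! of them.
  Grouping these deals by the set of cards that change hands, the moving cards form a block
  derangement, so the count is also \<Sum>k. (\<Prod>j. l j choose k j) * E k.  Summing over the box
  l < m and using the hockey-stick identity \<Sum>i<m. (i choose k) = m choose (k + 1) yields B m,
  whose definition is this sum after the shift k \<mapsto> k + 1.
\<close>

section \<open>Deals with prescribed hand sizes\<close>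

definition deals :: "nat \<Rightarrow> 'a set \<Rightarrow> (nat \<Rightarrow> nat) \<Rightarrow> ('a \<Rightarrow> nat) set" where
  "deals S D r = {f \<in> D \<rightarrow>\<^sub>E {..<S}. \<forall>j<S. card {x\<in>D. f x = j} = r j}"

lemma finite_deals: "finite D \<Longrightarrow> finite (deals S D r)"
  unfolding deals_def by (rule finite_subset[of _ "D \<rightarrow>\<^sub>E {..<S}"]) (auto intro: finite_PiE)

lemma card_eq_sum_card_fibres:
  assumes "finite A" "finite T" "g ` A \<subseteq> T"
  shows "card A = (\<Sum>t\<in>T. card {x\<in>A. g x = t})"
  using sum.group[OF assms, of "\<lambda>_. 1 :: nat"] by simp

lemma card_deals_with_last_hand:
  assumes T: "T \<subseteq> D" "card T = r S"
  shows "card {f \<in> deals (Suc S) D r. {x\<in>D. f x = S} = T} = card (deals S (D - T) r)"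
proof -
  let ?A = "{f \<in> deals (Suc S) D r. {x\<in>D. f x = S} = T}"
  have fibre_eq: "{x\<in>D - T. restrict f (D - T) x = j} = {x\<in>D. f x = j}" if "f \<in> ?A" "j < S" for f j
    using that by auto
  have "bij_betw (\<lambda>f. restrict f (D - T)) ?A (deals S (D - T) r)"
  proof (rule bij_betw_byWitness[where f'="\<lambda>g x. if x \<in> T then S else g x"])
    show "\<forall>f\<in>?A. (\<lambda>x. if x \<in> T then S else restrict f (D - T) x) = f"
      using T by (auto simp: deals_def PiE_def extensional_def fun_eq_iff)
    show "\<forall>g\<in>deals S (D - T) r. restrict (\<lambda>x. if x \<in> T then S else g x) (D - T) = g"
      by (auto simp: deals_def PiE_def extensional_def)
    show "(\<lambda>f. restrict f (D - T)) ` ?A \<subseteq> deals S (D - T) r"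
    proof (rule image_subsetI)
      fix f assume f: "f \<in> ?A"
      then have "restrict f (D - T) \<in> D - T \<rightarrow>\<^sub>E {..<S}"
        by (force simp: deals_def less_Suc_eq)
      moreover have "card {x\<in>D - T. restrict f (D - T) x = j} = r j" if "j < S" for j
        using fibre_eq[OF f that] f that by (simp add: deals_def)
      ultimately show "restrict f (D - T) \<in> deals S (D - T) r"
        by (simp add: deals_def)
    qed
    show "(\<lambda>g x. if x \<in> T then S else g x) ` deals S (D - T) r \<subseteq> ?A"
    proof (rule image_subsetI)
      fix g assume g: "g \<in> deals S (D - T) r"
      let ?h = "\<lambda>x. if x \<in> T then S else g x"
      have g_lt: "\<And>x. x \<in> D - T \<Longrightarrow> g x < S" and g_out: "\<And>x. x \<notin> D - T \<Longrightarrow> g x = undefined"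
        using g by (auto simp: deals_def PiE_def extensional_def)
      have "g x \<noteq> S" if "x \<in> D - T" for x
        using g_lt[OF that] by simp
      then have last: "{x\<in>D. ?h x = S} = T"
        using T by auto
      have "{x\<in>D. ?h x = j} = {x\<in>D - T. g x = j}" if "j < S" for j
        using that by auto
      with g last T have "\<forall>j<Suc S. card {x\<in>D. ?h x = j} = r j"
        by (auto simp: deals_def less_Suc_eq)
      moreover have "?h \<in> D \<rightarrow>\<^sub>E {..<Suc S}"
        using g_lt g_out T by (auto simp: PiE_def extensional_def less_Suc_eq)
      ultimately show "?h \<in> ?A"
        using last by (simp add: deals_def)
    qed
  qed
  then show ?thesis
    by (rule bij_betw_same_card)
qed

lemma card_deals_multinomial:
  assumes "finite D" "(\<Sum>j<S. r j) = card D"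
  shows "card (deals S D r) * (\<Prod>j<S. fact (r j)) = fact (card D)"
  using assms
proof (induction S arbitrary: D)
  case 0
  then show ?case by (simp add: deals_def)
next
  case (Suc S)
  let ?Ts = "{T. T \<subseteq> D \<and> card T = r S}"
  have r_le: "r S \<le> card D"
    using Suc.prems(2) by simp
  have IH: "card (deals S (D - T) r) * (\<Prod>j<S. fact (r j)) = fact (card D - r S)" if "T \<in> ?Ts" for T
  proof -
    have "card (D - T) = card D - r S"
      using that Suc.prems(1) by (auto simp: card_Diff_subset finite_subset)
    then show ?thesis
      using Suc.IH[of "D - T"] Suc.prems by simp
  qed
  have "card (deals (Suc S) D r) = (\<Sum>T\<in>?Ts. card {f \<in> deals (Suc S) D r. {x\<in>D. f x = S} = T})"
    using Suc.prems(1) by (intro card_eq_sum_card_fibres finite_deals) (auto simp: deals_def)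
  also have "\<dots> = (\<Sum>T\<in>?Ts. card (deals S (D - T) r))"
    by (rule sum.cong) (auto intro: card_deals_with_last_hand)
  finally have "card (deals (Suc S) D r) * (\<Prod>j<S. fact (r j)) = (\<Sum>T\<in>?Ts. fact (card D - r S))"
    by (simp add: sum_distrib_right IH)
  also have "\<dots> = (card D choose r S) * fact (card D - r S)"
    using n_subsets[OF Suc.prems(1)] by simp
  finally have "card (deals (Suc S) D r) * (\<Prod>j<S. fact (r j)) * fact (r S)
      = fact (r S) * fact (card D - r S) * (card D choose r S)"
    by simp
  also have "\<dots> = fact (card D)"
    using binomial_fact_lemma[OF r_le] .
  finally show ?case
    by (simp add: ac_simps)
qed

lemma real_card_deals_Sigma:
  "real (card (deals S (Sigma {..<S} (\<lambda>j. {..<l j})) l)) = fact (\<Sum>j<S. l j) / (\<Prod>j<S. fact (l j))"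
proof -
  have "card (Sigma {..<S} (\<lambda>j. {..<l j})) = (\<Sum>j<S. l j)"
    by (simp add: card_SigmaI)
  then have "real (card (deals S (Sigma {..<S} (\<lambda>j. {..<l j})) l)) * (\<Prod>j<S. fact (l j))
      = fact (\<Sum>j<S. l j)"
    using arg_cong[OF card_deals_multinomial[where D="Sigma {..<S} (\<lambda>j. {..<l j})" and S=S and r=l], of real]
    by (simp add: of_nat_prod)
  then show ?thesis
    by (simp add: field_simps)
qed

section \<open>Block derangements on arbitrary card sets\<close>

definition derangements :: "nat \<Rightarrow> (nat \<times> 'a) set \<Rightarrow> (nat \<Rightarrow> nat) \<Rightarrow> (nat \<times> 'a \<Rightarrow> nat) set" where
  "derangements S D r = {f \<in> deals S D r. \<forall>x\<in>D. f x \<noteq> fst x}"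

lemma E_eq_card_derangements: "E S n = card (derangements S (Sigma {..<S} (\<lambda>j. {..<n j})) n)"
proof -
  have "cards S n = Sigma {..<S} (\<lambda>j. {..<n j})"
    by (auto simp: cards_def)
  then show ?thesis
    by (simp add: E_def block_derangements_def derangements_def deals_def)
qed

lemma E_cong:
  assumes "\<And>j. j < S \<Longrightarrow> n j = n' j"
  shows "E S n = E S n'"
proof -
  have "Sigma {..<S} (\<lambda>j. {..<n j}) = Sigma {..<S} (\<lambda>j. {..<n' j})"
    using assms by auto
  moreover have "derangements S D n = derangements S D n'" for D :: "(nat \<times> nat) set"
    using assms by (auto simp: derangements_def deals_def)
  ultimately show ?thesis
    by (simp add: E_eq_card_derangements)
qed

lemma card_derangements_le_transport:
  assumes D: "finite D" and h: "bij_betw h D D'" and fst_h: "\<And>x. x \<in> D \<Longrightarrow> fst (h x) = fst x"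
  shows "card (derangements S D r) \<le> card (derangements S D' r)"
proof -
  let ?h' = "inv_into D h"
  let ?T = "\<lambda>f. \<lambda>y\<in>D'. f (?h' y)"
  have h'_h: "\<And>x. x \<in> D \<Longrightarrow> ?h' (h x) = x" and h_h': "\<And>y. y \<in> D' \<Longrightarrow> h (?h' y) = y"
    using h by (auto simp: bij_betw_inv_into_left bij_betw_inv_into_right)
  have h_D: "\<And>x. x \<in> D \<Longrightarrow> h x \<in> D'" and h'_D': "\<And>y. y \<in> D' \<Longrightarrow> ?h' y \<in> D"
    using h bij_betw_inv_into by (blast dest: bij_betwE)+
  have fibre: "{y\<in>D'. ?T f y = j} = h ` {x\<in>D. f x = j}" for f j
  proof (intro set_eqI iffI)
    fix y assume "y \<in> {y\<in>D'. ?T f y = j}"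
    then show "y \<in> h ` {x\<in>D. f x = j}"
      using h'_D' h_h' by (intro image_eqI[where x="?h' y"]) auto
  qed (use h_D h'_h in auto)
  have inj_h: "inj_on h A" if "A \<subseteq> D" for A
    using h that by (auto simp: bij_betw_def intro: inj_on_subset)
  have "inj_on ?T (derangements S D r)"
  proof (rule inj_onI)
    fix f g assume f: "f \<in> derangements S D r" and g: "g \<in> derangements S D r" and eq: "?T f = ?T g"
    show "f = g"
    proof (rule PiE_ext)
      show "f \<in> D \<rightarrow>\<^sub>E {..<S}" "g \<in> D \<rightarrow>\<^sub>E {..<S}"
        using f g by (simp_all add: derangements_def deals_def)
      show "f x = g x" if "x \<in> D" for x
        using fun_cong[OF eq, of "h x"] h_D h'_h that by simp
    qed
  qed
  moreover have "?T ` derangements S D r \<subseteq> derangements S D' r"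
  proof (rule image_subsetI)
    fix f assume "f \<in> derangements S D r"
    then have f_lt: "\<And>x. x \<in> D \<Longrightarrow> f x < S" and f_der: "\<And>x. x \<in> D \<Longrightarrow> f x \<noteq> fst x"
      and f_card: "\<And>j. j < S \<Longrightarrow> card {x\<in>D. f x = j} = r j"
      by (auto simp: derangements_def deals_def)
    have "?T f \<in> D' \<rightarrow>\<^sub>E {..<S}"
      using f_lt h'_D' by auto
    moreover have "card {y\<in>D'. ?T f y = j} = r j" if "j < S" for j
      unfolding fibre using f_card[OF that] card_image[OF inj_h[of "{x\<in>D. f x = j}"]] by simp
    moreover have "?T f y \<noteq> fst y" if "y \<in> D'" for y
      using f_der[OF h'_D'[OF that]] fst_h[OF h'_D'[OF that]] h_h'[OF that] that by simp
    ultimately show "?T f \<in> derangements S D' r"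
      by (simp add: derangements_def deals_def)
  qed
  moreover have "finite (derangements S D' r)"
    using D h finite_deals[of D' S r] by (simp add: derangements_def bij_betw_finite)
  ultimately show ?thesis
    by (rule card_inj_on_le)
qed

lemma card_derangements_transport:
  assumes "finite D" "bij_betw h D D'" "\<And>x. x \<in> D \<Longrightarrow> fst (h x) = fst x"
  shows "card (derangements S D r) = card (derangements S D' r)"
proof (rule antisym)
  show "card (derangements S D r) \<le> card (derangements S D' r)"
    using assms by (rule card_derangements_le_transport)
  have "\<And>y. y \<in> D' \<Longrightarrow> fst (inv_into D h y) = fst y"
    using assms(2,3) by (metis bij_betw_inv_into_right bij_betw_imp_surj_on inv_into_into)
  then show "card (derangements S D' r) \<le> card (derangements S D r)"
    using assms bij_betw_inv_into bij_betw_finite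
    by (blast intro: card_derangements_le_transport)
qed

lemma bij_betw_Sigma_fibrewise:
  assumes "\<And>i. i \<in> I \<Longrightarrow> bij_betw (g i) (X i) (Y i)"
  shows "bij_betw (\<lambda>(i, a). (i, g i a)) (Sigma I X) (Sigma I Y)"
proof -
  have "\<And>i x. i \<in> I \<Longrightarrow> x \<in> X i \<Longrightarrow> inv_into (X i) (g i) (g i x) = x \<and> g i x \<in> Y i"
    and "\<And>i y. i \<in> I \<Longrightarrow> y \<in> Y i \<Longrightarrow> g i (inv_into (X i) (g i) y) = y \<and> inv_into (X i) (g i) y \<in> X i"
    using assms by (meson bij_betwE bij_betw_inv_into bij_betw_inv_into_left bij_betw_inv_into_right)+
  then show ?thesis
    by (intro bij_betw_byWitness[where f'="\<lambda>(i, b). (i, inv_into (X i) (g i) b)"]) auto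
qed

lemma card_derangements_Sigma:
  assumes "\<And>j. j < S \<Longrightarrow> finite (M j)"
  shows "card (derangements S (Sigma {..<S} M) (\<lambda>j. card (M j))) = E S (\<lambda>j. card (M j))"
proof -
  have "\<forall>j\<in>{..<S}. \<exists>g. bij_betw g {..<card (M j)} (M j)"
    using assms by (metis atLeast0LessThan ex_bij_betw_nat_finite lessThan_iff)
  then obtain g where "\<And>j. j \<in> {..<S} \<Longrightarrow> bij_betw (g j) {..<card (M j)} (M j)"
    by metis
  then have "card (derangements S (Sigma {..<S} (\<lambda>j. {..<card (M j)})) (\<lambda>j. card (M j)))
      = card (derangements S (Sigma {..<S} M) (\<lambda>j. card (M j)))"
    by (intro card_derangements_transport[OF _ bij_betw_Sigma_fibrewise]) auto
  then show ?thesis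
    by (simp add: E_eq_card_derangements)
qed

section \<open>Counting deals by the cards that change hands\<close>

definition moved_cards :: "nat \<Rightarrow> (nat \<Rightarrow> nat) \<Rightarrow> (nat \<times> nat \<Rightarrow> nat) \<Rightarrow> nat \<Rightarrow> nat set" where
  "moved_cards S l f = (\<lambda>j\<in>{..<S}. {c\<in>{..<l j}. f (j, c) \<noteq> j})"

lemma card_hand_split:
  fixes l :: "nat \<Rightarrow> nat" and f :: "nat \<times> nat \<Rightarrow> nat"
  assumes M: "\<And>j. j < S \<Longrightarrow> M j \<subseteq> {..<l j}" and j: "j < S"
    and stay: "\<And>x. x \<in> Sigma {..<S} (\<lambda>j. {..<l j}) - Sigma {..<S} M \<Longrightarrow> f x = fst x"
  shows "card {x \<in> Sigma {..<S} (\<lambda>j. {..<l j}). f x = j}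
       = card {x \<in> Sigma {..<S} M. f x = j} + (l j - card (M j))"
proof -
  let ?moved = "{x \<in> Sigma {..<S} M. f x = j}" and ?kept = "Pair j ` ({..<l j} - M j)"
  have "finite (Sigma {..<S} M)"
    using M by (intro finite_SigmaI) (auto intro: finite_subset)
  then have "finite ?moved"
    by simp
  moreover have "{x \<in> Sigma {..<S} (\<lambda>j. {..<l j}). f x = j} = ?moved \<union> ?kept"
    using M j stay by (auto simp: subset_iff)
  moreover have "card ?kept = l j - card (M j)"
    using M[OF j] by (simp add: card_image card_Diff_subset finite_subset inj_on_def)
  moreover have "?moved \<inter> ?kept = {}"
    by auto
  ultimately show ?thesis
    by (simp add: card_Un_disjoint)
qed

lemma moved_cards_eq_iff:
  fixes l :: "nat \<Rightarrow> nat"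
  assumes M: "M \<in> Pi\<^sub>E {..<S} (\<lambda>j. Pow {..<l j})"
  shows "moved_cards S l f = M \<longleftrightarrow>
    (\<forall>x \<in> Sigma {..<S} (\<lambda>j. {..<l j}). x \<in> Sigma {..<S} M \<longleftrightarrow> f x \<noteq> fst x)"
proof -
  have "moved_cards S l f = M \<longleftrightarrow> (\<forall>j<S. M j = {c\<in>{..<l j}. f (j, c) \<noteq> j})"
    using M by (auto simp: moved_cards_def PiE_iff extensional_def fun_eq_iff)
  also have "\<dots> \<longleftrightarrow> (\<forall>x \<in> Sigma {..<S} (\<lambda>j. {..<l j}). x \<in> Sigma {..<S} M \<longleftrightarrow> f x \<noteq> fst x)"
    using M by (auto simp: PiE_iff subset_iff)
  finally show ?thesis .
qed

definition extend_by_returning :: "(nat \<times> 'a) set \<Rightarrow> (nat \<times> 'a) set \<Rightarrow> (nat \<times> 'a \<Rightarrow> nat) \<Rightarrow> nat \<times> 'a \<Rightarrow> nat" where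
  "extend_by_returning C D g = (\<lambda>x\<in>C. if x \<in> D then g x else fst x)"

context
  fixes S :: nat and l :: "nat \<Rightarrow> nat" and M :: "nat \<Rightarrow> nat set"
  assumes M: "M \<in> Pi\<^sub>E {..<S} (\<lambda>j. Pow {..<l j})"
begin

private lemma moved_subset: "j < S \<Longrightarrow> M j \<subseteq> {..<l j}"
  using M by auto

private lemma card_moved_le: "j < S \<Longrightarrow> card (M j) \<le> l j"
  using moved_subset by (metis card_lessThan card_mono finite_lessThan)

lemma restrict_moved_in_derangements:
  assumes f: "f \<in> deals S (Sigma {..<S} (\<lambda>j. {..<l j})) l" "moved_cards S l f = M"
  shows "restrict f (Sigma {..<S} M) \<in> derangements S (Sigma {..<S} M) (\<lambda>j. card (M j))"
proof -
  let ?C = "Sigma {..<S} (\<lambda>j. {..<l j})" and ?DM = "Sigma {..<S} M"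
  have moved_iff: "\<forall>x\<in>?C. x \<in> ?DM \<longleftrightarrow> f x \<noteq> fst x"
    using f(2) moved_cards_eq_iff[OF M] by simp
  have "?DM \<subseteq> ?C"
    using moved_subset by auto
  then have "restrict f ?DM \<in> ?DM \<rightarrow>\<^sub>E {..<S}" and "\<forall>x\<in>?DM. restrict f ?DM x \<noteq> fst x"
    using f(1) moved_iff by (auto simp: deals_def)
  moreover have "card {x\<in>?DM. restrict f ?DM x = j} = card (M j)" if "j < S" for j
  proof -
    have "f x = fst x" if "x \<in> ?C - ?DM" for x
      using moved_iff that by auto
    then have "l j = card {x\<in>?DM. f x = j} + (l j - card (M j))"
      using card_hand_split[where M=M and j=j and f=f, OF moved_subset that] f(1) that
      by (simp add: deals_def)
    moreover have "{x\<in>?DM. restrict f ?DM x = j} = {x\<in>?DM. f x = j}"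
      by auto
    ultimately show ?thesis
      using card_moved_le[OF that] by simp
  qed
  ultimately show ?thesis
    by (simp add: derangements_def deals_def)
qed

lemma extend_by_returning_in_deals:
  assumes g: "g \<in> derangements S (Sigma {..<S} M) (\<lambda>j. card (M j))"
  defines "C \<equiv> Sigma {..<S} (\<lambda>j. {..<l j})"
  shows "extend_by_returning C (Sigma {..<S} M) g \<in> deals S C l"
    and "moved_cards S l (extend_by_returning C (Sigma {..<S} M) g) = M"
proof -
  let ?DM = "Sigma {..<S} M" and ?h = "extend_by_returning C (Sigma {..<S} M) g"
  have DM_C: "?DM \<subseteq> C"
    using moved_subset by (auto simp: C_def)
  have "?h \<in> C \<rightarrow>\<^sub>E {..<S}"
    using g by (auto simp: extend_by_returning_def derangements_def deals_def C_def)
  moreover have "card {x\<in>C. ?h x = j} = l j" if "j < S" for j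
  proof -
    have "{x\<in>?DM. ?h x = j} = {x\<in>?DM. g x = j}"
      using DM_C by (auto simp: extend_by_returning_def)
    then show ?thesis
      using card_hand_split[where M=M and j=j and f="?h", OF moved_subset that] g
        card_moved_le[OF that] that
      by (simp add: derangements_def deals_def extend_by_returning_def C_def)
  qed
  ultimately show "?h \<in> deals S C l"
    by (simp add: deals_def)
  show "moved_cards S l ?h = M"
    using g DM_C
    by (auto simp: moved_cards_eq_iff[OF M] derangements_def extend_by_returning_def C_def)
qed

lemma card_deals_with_moved_cards:
  "card {f \<in> deals S (Sigma {..<S} (\<lambda>j. {..<l j})) l. moved_cards S l f = M}
     = E S (\<lambda>j. card (M j))"
proof -
  let ?C = "Sigma {..<S} (\<lambda>j. {..<l j})" and ?DM = "Sigma {..<S} M"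
  let ?A = "{f \<in> deals S ?C l. moved_cards S l f = M}"
  have "bij_betw (\<lambda>f. restrict f ?DM) ?A (derangements S ?DM (\<lambda>j. card (M j)))"
  proof (rule bij_betw_byWitness[where f'="extend_by_returning ?C ?DM"])
    show "\<forall>f\<in>?A. extend_by_returning ?C ?DM (restrict f ?DM) = f"
    proof (intro ballI ext)
      fix f x assume f: "f \<in> ?A"
      then have "x \<in> ?C \<Longrightarrow> x \<in> ?DM \<longleftrightarrow> f x \<noteq> fst x" and "x \<notin> ?C \<Longrightarrow> f x = undefined"
        using moved_cards_eq_iff[OF M, of f] PiE_arb[of f ?C _ x] by (auto simp: deals_def)
      then show "extend_by_returning ?C ?DM (restrict f ?DM) x = f x"
        by (auto simp: extend_by_returning_def)
    qed
    show "\<forall>g\<in>derangements S ?DM (\<lambda>j. card (M j)). restrict (extend_by_returning ?C ?DM g) ?DM = g"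
    proof
      fix g assume g: "g \<in> derangements S ?DM (\<lambda>j. card (M j))"
      have "restrict (extend_by_returning ?C ?DM g) ?DM = restrict g ?DM"
        using moved_subset by (intro restrict_ext) (auto simp: extend_by_returning_def)
      also have "\<dots> = g"
        using g by (auto simp: derangements_def deals_def)
      finally show "restrict (extend_by_returning ?C ?DM g) ?DM = g" .
    qed
  qed (use restrict_moved_in_derangements extend_by_returning_in_deals in auto)
  then have "card ?A = card (derangements S ?DM (\<lambda>j. card (M j)))"
    by (rule bij_betw_same_card)
  also have "\<dots> = E S (\<lambda>j. card (M j))"
    using moved_subset by (intro card_derangements_Sigma) (auto intro: finite_subset)
  finally show ?thesis .
qed

end

lemma card_deals_eq_sum_moved_cards:
  "card (deals S (Sigma {..<S} (\<lambda>j. {..<l j})) l)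
     = (\<Sum>M\<in>Pi\<^sub>E {..<S} (\<lambda>j. Pow {..<l j}). E S (\<lambda>j. card (M j)))"
proof -
  let ?C = "Sigma {..<S} (\<lambda>j. {..<l j})" and ?Ms = "Pi\<^sub>E {..<S} (\<lambda>j. Pow {..<l j})"
  have "finite ?C" "finite ?Ms"
    by (auto intro: finite_PiE)
  moreover have "moved_cards S l ` deals S ?C l \<subseteq> ?Ms"
    by (auto simp: moved_cards_def)
  ultimately have "card (deals S ?C l) = (\<Sum>M\<in>?Ms. card {f \<in> deals S ?C l. moved_cards S l f = M})"
    by (intro card_eq_sum_card_fibres finite_deals)
  also have "\<dots> = (\<Sum>M\<in>?Ms. E S (\<lambda>j. card (M j)))"
    by (rule sum.cong) (simp_all add: card_deals_with_moved_cards)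
  finally show ?thesis .
qed

lemma sum_E_card_subsets:
  "(\<Sum>M\<in>Pi\<^sub>E {..<S} (\<lambda>j. Pow {..<l j}). E S (\<lambda>j. card (M j)))
     = (\<Sum>k\<in>Pi\<^sub>E {..<S} (\<lambda>j. {..l j}). (\<Prod>j<S. l j choose k j) * E S k)"
proof -
  let ?Ms = "Pi\<^sub>E {..<S} (\<lambda>j. Pow {..<l j})" and ?K = "Pi\<^sub>E {..<S} (\<lambda>j. {..l j})"
  let ?size = "\<lambda>M. \<lambda>j\<in>{..<S}. card (M j)"
  have "?size ` ?Ms \<subseteq> ?K"
    by (force simp: PiE_iff dest: card_mono[OF finite_lessThan])
  then have "(\<Sum>M\<in>?Ms. E S (\<lambda>j. card (M j))) = (\<Sum>k\<in>?K. \<Sum>M\<in>{M\<in>?Ms. ?size M = k}. E S (\<lambda>j. card (M j)))"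
    by (intro sum.group[symmetric]) (auto intro: finite_PiE)
  also have "\<dots> = (\<Sum>k\<in>?K. (\<Prod>j<S. l j choose k j) * E S k)"
  proof (rule sum.cong[OF refl])
    fix k assume k: "k \<in> ?K"
    have fibre: "{M\<in>?Ms. ?size M = k} = Pi\<^sub>E {..<S} (\<lambda>j. {A. A \<subseteq> {..<l j} \<and> card A = k j})"
      using k by (auto simp: PiE_def extensional_def fun_eq_iff)
    have "(\<Sum>M\<in>{M\<in>?Ms. ?size M = k}. E S (\<lambda>j. card (M j))) = (\<Sum>M\<in>{M\<in>?Ms. ?size M = k}. E S k)"
      by (intro sum.cong refl E_cong) (auto dest: fun_cong)
    also have "\<dots> = (\<Prod>j<S. l j choose k j) * E S k"
      by (simp add: fibre card_PiE n_subsets)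
    finally show "(\<Sum>M\<in>{M\<in>?Ms. ?size M = k}. E S (\<lambda>j. card (M j))) = (\<Prod>j<S. l j choose k j) * E S k" .
  qed
  finally show ?thesis .
qed

lemma card_deals_eq_sum_choose_E:
  assumes l: "l \<in> Pi\<^sub>E {..<S} (\<lambda>j. {..<m j})"
  shows "card (deals S (Sigma {..<S} (\<lambda>j. {..<l j})) l)
       = (\<Sum>k\<in>Pi\<^sub>E {..<S} (\<lambda>j. {..<m j}). (\<Prod>j<S. l j choose k j) * E S k)"
  unfolding card_deals_eq_sum_moved_cards sum_E_card_subsets
proof (rule sum.mono_neutral_left)
  show "Pi\<^sub>E {..<S} (\<lambda>j. {..l j}) \<subseteq> Pi\<^sub>E {..<S} (\<lambda>j. {..<m j})"
    using l by (intro PiE_mono) (force simp: PiE_iff)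
  show "\<forall>k\<in>Pi\<^sub>E {..<S} (\<lambda>j. {..<m j}) - Pi\<^sub>E {..<S} (\<lambda>j. {..l j}). (\<Prod>j<S. l j choose k j) * E S k = 0"
    by (auto simp: PiE_iff not_le)
qed (auto intro: finite_PiE)

section \<open>Summation over the box\<close>

lemma sum_choose_lessThan: "0 < m \<Longrightarrow> (\<Sum>i<m. i choose k) = m choose Suc k"
  by (cases m) (simp_all add: lessThan_Suc_atMost sum_choose_upper)

lemma sum_card_deals_box:
  assumes "\<And>j. j < S \<Longrightarrow> 0 < m j"
  shows "(\<Sum>l\<in>Pi\<^sub>E {..<S} (\<lambda>j. {..<m j}). card (deals S (Sigma {..<S} (\<lambda>j. {..<l j})) l))
       = (\<Sum>k\<in>Pi\<^sub>E {..<S} (\<lambda>j. {..<m j}). (\<Prod>j<S. m j choose Suc (k j)) * E S k)"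
proof -
  let ?L = "Pi\<^sub>E {..<S} (\<lambda>j. {..<m j})"
  have "(\<Sum>l\<in>?L. card (deals S (Sigma {..<S} (\<lambda>j. {..<l j})) l))
      = (\<Sum>l\<in>?L. \<Sum>k\<in>?L. (\<Prod>j<S. l j choose k j) * E S k)"
    by (simp add: card_deals_eq_sum_choose_E)
  also have "\<dots> = (\<Sum>k\<in>?L. (\<Sum>l\<in>?L. \<Prod>j<S. l j choose k j) * E S k)"
    by (subst sum.swap) (simp add: sum_distrib_right)
  also have "\<dots> = (\<Sum>k\<in>?L. (\<Prod>j<S. m j choose Suc (k j)) * E S k)"
  proof (rule sum.cong[OF refl])
    fix k
    have "(\<Sum>l\<in>?L. \<Prod>j<S. l j choose k j) = (\<Prod>j<S. \<Sum>i<m j. i choose k j)"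
      by (rule prod_sum_PiE[symmetric]) auto
    also have "\<dots> = (\<Prod>j<S. m j choose Suc (k j))"
      using assms by (simp add: sum_choose_lessThan)
    finally show "(\<Sum>l\<in>?L. \<Prod>j<S. l j choose k j) * E S k = (\<Prod>j<S. m j choose Suc (k j)) * E S k"
      by simp
  qed
  finally show ?thesis .
qed

lemma bij_betw_PiE_pointwise:
  assumes "\<And>i. i \<in> I \<Longrightarrow> bij_betw (g i) (X i) (Y i)"
  shows "bij_betw (\<lambda>k. \<lambda>i\<in>I. g i (k i)) (Pi\<^sub>E I X) (Pi\<^sub>E I Y)"
proof -
  have "\<And>i x. i \<in> I \<Longrightarrow> x \<in> X i \<Longrightarrow> inv_into (X i) (g i) (g i x) = x \<and> g i x \<in> Y i"
    and "\<And>i y. i \<in> I \<Longrightarrow> y \<in> Y i \<Longrightarrow> g i (inv_into (X i) (g i) y) = y \<and> inv_into (X i) (g i) y \<in> X i"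
    using assms by (meson bij_betwE bij_betw_inv_into bij_betw_inv_into_left bij_betw_inv_into_right)+
  then show ?thesis
    by (intro bij_betw_byWitness[where f'="\<lambda>k. \<lambda>i\<in>I. inv_into (X i) (g i) (k i)"])
      (auto simp: PiE_iff extensional_def fun_eq_iff)
qed

lemma B_eq_sum_shifted:
  "B S m = (\<Sum>k\<in>Pi\<^sub>E {..<S} (\<lambda>j. {..<m j}). (\<Prod>j<S. m j choose Suc (k j)) * E S k)"
proof -
  let ?shift = "\<lambda>k. \<lambda>j\<in>{..<S}. Suc (k j)"
  have "bij_betw ?shift (Pi\<^sub>E {..<S} (\<lambda>j. {..<m j})) (Pi\<^sub>E {..<S} (\<lambda>j. {1..m j}))"
    by (intro bij_betw_PiE_pointwise) (simp add: bij_betw_def image_Suc_lessThan)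
  then have "B S m = (\<Sum>k\<in>Pi\<^sub>E {..<S} (\<lambda>j. {..<m j}).
      (\<Prod>j<S. m j choose ?shift k j) * E S (\<lambda>j. ?shift k j - 1))"
    unfolding B_def by (rule sum.reindex_bij_betw[symmetric])
  also have "\<dots> = (\<Sum>k\<in>Pi\<^sub>E {..<S} (\<lambda>j. {..<m j}). (\<Prod>j<S. m j choose Suc (k j)) * E S k)"
    by (intro sum.cong refl arg_cong2[where f="(*)"] prod.cong E_cong) auto
  finally show ?thesis .
qed

theorem mainTheorem10:
  fixes S :: nat and m :: "nat \<Rightarrow> nat"
  assumes "\<forall>j<S. m j > 0"
  shows "real (B S m) =
    (\<Sum>l \<in> Pi\<^sub>E {..<S} (\<lambda>j. {..<m j}).
        fact (\<Sum>j<S. l j) / (\<Prod>j<S. fact (l j)))"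
proof -
  have "B S m = (\<Sum>l\<in>Pi\<^sub>E {..<S} (\<lambda>j. {..<m j}). card (deals S (Sigma {..<S} (\<lambda>j. {..<l j})) l))"
    using assms by (simp add: B_eq_sum_shifted sum_card_deals_box)
  then show ?thesis
    by (simp add: real_card_deals_Sigma)
qed

end
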